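(* Let $\Omega$ be a bounded strictly convex planar domain with $\mathcal{C}^1$ boundary, axially symmetric with respect to a line, and let $O$ be one of the two points of $\partial\Omega$ on the symmetry axis. Let $q\ge2$ and let $\mathcal{P}^{(q)}$ be the set of convex $q$-gons $(p_0,\dots,p_{q-1})$ with vertices on $\partial\Omega$ in positive cyclic order, symmetric with respect to the axis, and with $p_0=O$. If $\underline{p}^{(\Omega,q)}\in\mathcal{P}^{(q)}$ maximizes the area among all polygons in $\mathcal{P}^{(q)}$, then its vertices form a $q$-periodic orbit of the symplectic billiard in $\Omega$.
   Context: Symplectic billiard in $\Omega$: a chord $(q_1,q_2)$ of $\partial\Omega$ is sent to $(q_2,q_3)$ where $q_3\in\partial\Omega$ is such that the line $q_1q_3$ is parallel to the tangent line to $\partial\Omega$ at $q_2$. A $q$-periodic orbit is a cyclic sequence $p_0,\dots,p_{q-1}$ of boundary points such that every triple $(p_{j-1},p_j,p_{j+1})$ (indices mod $q$) consists of consecutive bounces. *)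

theory Defs
  imports "HOL-Analysis.Analysis"
begin

definition det2 :: "real^2 \<Rightarrow> real^2 \<Rightarrow> real" where
  "det2 v w = v$1 * w$2 - v$2 * w$1"

definition strictly_convex_domain :: "(real^2) set \<Rightarrow> bool" where
  "strictly_convex_domain \<Omega> \<longleftrightarrow> open \<Omega> \<and> \<Omega> \<noteq> {} \<and> bounded \<Omega> \<and> convex \<Omega> \<and>
     (\<forall>x\<in>closure \<Omega>. \<forall>y\<in>closure \<Omega>. x \<noteq> y \<longrightarrow> open_segment x y \<subseteq> \<Omega>)"

definition C1_boundary_param ::
  "(real^2) set \<Rightarrow> (real \<Rightarrow> real^2) \<Rightarrow> (real \<Rightarrow> real^2) \<Rightarrow> bool" where
  "C1_boundary_param \<Omega> \<gamma> \<gamma>' \<longleftrightarrow>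
     (\<forall>t. (\<gamma> has_vector_derivative \<gamma>' t) (at t)) \<and> continuous_on UNIV \<gamma>' \<and>
     (\<forall>t. \<gamma>' t \<noteq> 0) \<and> (\<forall>t. \<gamma> (t + 1) = \<gamma> t) \<and>
     inj_on \<gamma> {0..<1} \<and> \<gamma> ` {0..<1} = frontier \<Omega>"

definition reflection_line :: "real^2 \<Rightarrow> real^2 \<Rightarrow> real^2 \<Rightarrow> real^2" where
  "reflection_line a u x = a + (2 * ((x - a) \<bullet> u)) *\<^sub>R u - (x - a)"

definition axially_symmetric :: "(real^2) set \<Rightarrow> real^2 \<Rightarrow> real^2 \<Rightarrow> bool" where
  "axially_symmetric \<Omega> a u \<longleftrightarrow> norm u = 1 \<and> reflection_line a u ` \<Omega> = \<Omega>"

text \<open>Area of the polygon p 0, ..., p (q-1) (shoelace formula; positive for counterclockwise order).\<close>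
definition polygon_area :: "nat \<Rightarrow> (nat \<Rightarrow> real^2) \<Rightarrow> real" where
  "polygon_area q p = (1/2) * (\<Sum>j<q. det2 (p j) (p ((j + 1) mod q)))"

text \<open>The class P^(q): convex q-gons with vertices on the boundary in positive cyclic order
  (distinct vertices, every triple i<j<k positively oriented), symmetric with respect to the axis,
  and with p 0 = P0.\<close>
definition sym_polygons ::
  "(real^2) set \<Rightarrow> real^2 \<Rightarrow> real^2 \<Rightarrow> real^2 \<Rightarrow> nat \<Rightarrow> (nat \<Rightarrow> real^2) set" where
  "sym_polygons \<Omega> a u P0 q = {p.
     (\<forall>j<q. p j \<in> frontier \<Omega>) \<and> inj_on p {..<q} \<and>
     (\<forall>i j k. i < j \<and> j < k \<and> k < q \<longrightarrow> det2 (p j - p i) (p k - p i) > 0) \<and>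
     reflection_line a u ` (p ` {..<q}) = p ` {..<q} \<and>
     p 0 = P0}"

text \<open>(q1,q2) is sent to (q2,q3) by the symplectic billiard: q3 lies on the line through q1
  parallel to the tangent at q2, and q3 is the second intersection point of that line with the
  boundary (q3 = q1 only if that line is tangent at q1).\<close>
definition consecutive_bounces ::
  "(real^2) set \<Rightarrow> (real \<Rightarrow> real^2) \<Rightarrow> (real \<Rightarrow> real^2) \<Rightarrow> real^2 \<Rightarrow> real^2 \<Rightarrow> real^2 \<Rightarrow> bool" where
  "consecutive_bounces \<Omega> \<gamma> \<gamma>' q1 q2 q3 \<longleftrightarrow>
     q1 \<in> frontier \<Omega> \<and> q2 \<in> frontier \<Omega> \<and> q3 \<in> frontier \<Omega> \<and> q1 \<noteq> q2 \<and> q2 \<noteq> q3 \<and>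
     (\<exists>t. \<gamma> t = q2 \<and> det2 (q3 - q1) (\<gamma>' t) = 0 \<and>
        (q3 = q1 \<longrightarrow> (\<exists>s. \<gamma> s = q1 \<and> det2 (\<gamma>' s) (\<gamma>' t) = 0)))"

definition symplectic_periodic_orbit ::
  "(real^2) set \<Rightarrow> (real \<Rightarrow> real^2) \<Rightarrow> (real \<Rightarrow> real^2) \<Rightarrow> nat \<Rightarrow> (nat \<Rightarrow> real^2) \<Rightarrow> bool" where
  "symplectic_periodic_orbit \<Omega> \<gamma> \<gamma>' q p \<longleftrightarrow>
     (\<forall>j<q. consecutive_bounces \<Omega> \<gamma> \<gamma>' (p ((j + q - 1) mod q)) (p j) (p ((j + 1) mod q)))"

end

theory Submission
  imports Defs
begin

text \<open>
  The reflection in the axis reverses orientation and fixes \<open>p 0\<close>, so it acts on the vertices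
  as \<open>i \<mapsto> q - i\<close>. A vertex on the axis has a tangent orthogonal to the axis, since the line
  through it perpendicular to the axis supports the symmetric strictly convex domain; its two
  neighbours are mirror images of each other, so the chord joining them is orthogonal to the
  axis too. An off-axis vertex is moved along the boundary together with its mirror vertex,
  which keeps the polygon in the class. The first variation of the shoelace area is
  \<open>1/2 \<Sum>i. det (\<delta>p i, p (i + 1) - p (i - 1))\<close>, to which the two moved vertices contribute
  equally; at a maximum it vanishes, i.e. the chord from \<open>p (j - 1)\<close> to \<open>p (j + 1)\<close> is parallel
  to the tangent at \<open>p j\<close>.
\<close>

text \<open>Cyclic index identities are checked on integer residues, avoiding truncated subtraction.\<close>

lemma int_mirror_index: "(i::nat) < q \<Longrightarrow> int ((q - i) mod q) = - int i mod int q"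
  by (simp add: zmod_int of_nat_diff mod_diff_left_eq[symmetric])

lemma int_prev_index:
  fixes i q :: nat assumes "0 < q" shows "int ((i + q - 1) mod q) = (int i - 1) mod int q"
proof -
  have "int (i + q - 1) = (int i - 1) + int q" using assms by (simp add: of_nat_diff)
  then show ?thesis by (simp add: zmod_int)
qed

lemma int_next_index: "int (((i::nat) + 1) mod q) = (int i + 1) mod int q"
  by (simp add: zmod_int add.commute)

lemma mirror_prev_index:
  fixes i q :: nat assumes i: "i < q"
  shows "(q - (i + q - 1) mod q) mod q = ((q - i) mod q + 1) mod q"
proof -
  have q: "0 < q" and lt: "(i + q - 1) mod q < q" using i by simp_all
  then have "int ((q - (i + q - 1) mod q) mod q) = int (((q - i) mod q + 1) mod q)"
    unfolding int_mirror_index[OF lt] int_prev_index[OF q] int_next_index int_mirror_index[OF i]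
    by (simp add: mod_simps)
  then show ?thesis by (simp only: of_nat_eq_iff)
qed

lemma mirror_next_index:
  fixes i q :: nat assumes i: "i < q"
  shows "(q - (i + 1) mod q) mod q = ((q - i) mod q + q - 1) mod q"
proof -
  have q: "0 < q" and lt: "(i + 1) mod q < q" using i by simp_all
  then have "int ((q - (i + 1) mod q) mod q) = int (((q - i) mod q + q - 1) mod q)"
    unfolding int_mirror_index[OF lt] int_prev_index[OF q] int_next_index int_mirror_index[OF i]
    by (simp add: mod_simps)
  then show ?thesis by (simp only: of_nat_eq_iff)
qed

lemma mirror_mirror_index:
  fixes i q :: nat assumes i: "i < q"
  shows "(q - (q - i) mod q) mod q = i"
proof -
  have lt: "(q - i) mod q < q" using i by simp
  then have "int ((q - (q - i) mod q) mod q) = int i"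
    unfolding int_mirror_index[OF lt] int_mirror_index[OF i] using i
    by (simp add: mod_simps)
  then show ?thesis by (simp only: of_nat_eq_iff)
qed

lemma prev_next_index:
  fixes i q :: nat assumes i: "i < q"
  shows "((i + 1) mod q + q - 1) mod q = i"
proof -
  have q: "0 < q" using i by simp
  then have "int (((i + 1) mod q + q - 1) mod q) = int i"
    unfolding int_prev_index[OF q] int_next_index using i by (simp add: mod_simps)
  then show ?thesis by (simp only: of_nat_eq_iff)
qed

lemma next_prev_index:
  fixes i q :: nat assumes i: "i < q"
  shows "((i + q - 1) mod q + 1) mod q = i"
proof -
  have q: "0 < q" using i by simp
  then have "int (((i + q - 1) mod q + 1) mod q) = int i"
    unfolding int_prev_index[OF q] int_next_index using i by (simp add: mod_simps)
  then show ?thesis by (simp only: of_nat_eq_iff)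
qed

lemma next_index_neq:
  fixes i q :: nat assumes "2 \<le> q" shows "(i + 1) mod q \<noteq> i mod q"
proof
  assume "(i + 1) mod q = i mod q"
  then have "(int i + 1) mod int q = int i mod int q"
    unfolding int_next_index[symmetric] zmod_int[symmetric] by (simp only: of_nat_eq_iff)
  then have "int q dvd (int i + 1) - int i" by (simp only: mod_eq_dvd_iff)
  then show False using assms by simp
qed

lemma mirror_index_eq_if_next_eq_prev:
  fixes i q :: nat assumes i: "i < q" and eq: "(i + 1) mod q = (i + q - 1) mod q"
  shows "(q - i) mod q = i"
proof -
  have q: "0 < q" using i by simp
  have "(int i + 1) mod int q = (int i - 1) mod int q"
    using arg_cong[OF eq, of int] unfolding int_prev_index[OF q] int_next_index .
  then have "int q dvd (int i + 1) - (int i - 1)" by (simp only: mod_eq_dvd_iff)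
  then have dvd: "int q dvd 2" by simp
  have "- int i - int i = 2 * (- int i)" by simp
  then have "int q dvd - int i - int i" using dvd_mult2[OF dvd, of "- int i"] by (simp only:)
  then have "- int i mod int q = int i mod int q" by (simp only: mod_eq_dvd_iff)
  moreover have "int i mod int q = int i" using i by simp
  ultimately have "int ((q - i) mod q) = int i" unfolding int_mirror_index[OF i] by simp
  then show ?thesis by (simp only: of_nat_eq_iff)
qed

lemma det2_swap: "det2 v w = - det2 w v"
  by (simp add: det2_def)

lemma det2_diff_right: "det2 v (x - y) = det2 v x - det2 v y"
  by (simp add: det2_def algebra_simps)

lemma det2_eq_0_if_orthogonal:
  assumes "v \<bullet> u = 0" "w \<bullet> u = 0" "u \<noteq> 0"
  shows "det2 v w = 0"
proof -
  have "u$1 * det2 v w = w$2 * (v \<bullet> u) - v$2 * (w \<bullet> u)"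
    and "u$2 * det2 v w = v$1 * (w \<bullet> u) - w$1 * (v \<bullet> u)"
    by (simp_all add: det2_def inner_vec_def sum_2 algebra_simps)
  moreover have "u$1 \<noteq> 0 \<or> u$2 \<noteq> 0" using assms(3) by (simp add: vec_eq_iff forall_2)
  ultimately show ?thesis using assms(1,2) by auto
qed

lemma reflection_line_eq: "reflection_line a u x = a + reflection_line 0 u (x - a)"
  by (simp add: reflection_line_def)

lemma reflection_line_diff:
  "reflection_line a u x - reflection_line a u y = reflection_line 0 u (x - y)"
  by (simp add: reflection_line_def algebra_simps inner_diff_left)

lemma inner_reflection_line_0: "norm u = 1 \<Longrightarrow> reflection_line 0 u v \<bullet> u = v \<bullet> u"
  by (simp add: reflection_line_def inner_diff_left norm_eq_1)

lemma reflection_line_involutive: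
  assumes "norm u = 1" shows "reflection_line a u (reflection_line a u x) = x"
proof -
  have "reflection_line 0 u (reflection_line 0 u v) = v" for v
    using inner_reflection_line_0[OF assms, of v]
    by (simp add: reflection_line_def[of 0 u "reflection_line 0 u v"]) (simp add: reflection_line_def)
  then show ?thesis by (simp add: reflection_line_eq[of a u])
qed

lemma reflection_line_sub_orthogonal:
  assumes "norm u = 1" shows "(reflection_line a u x - x) \<bullet> u = 0"
proof -
  have eq: "reflection_line a u x - x = reflection_line 0 u (x - a) - (x - a)"
    by (subst reflection_line_eq) simp
  show ?thesis unfolding eq inner_diff_left[of _ "x - a"] inner_reflection_line_0[OF assms] by simp
qed

lemma bounded_linear_reflection_line_0: "bounded_linear (reflection_line 0 u)"
  unfolding reflection_line_def by (intro bounded_linear_intros)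

lemma det2_reflection_line_0:
  assumes "norm u = 1"
  shows "det2 (reflection_line 0 u v) (reflection_line 0 u w) = - det2 v w"
proof -
  have "u$1 * u$1 + u$2 * u$2 = 1" using assms by (simp add: norm_eq_1 inner_vec_def sum_2)
  moreover have "det2 (reflection_line 0 u v) (reflection_line 0 u w)
      = (1 - 2 * (u$1 * u$1 + u$2 * u$2)) * det2 v w"
    by (simp add: det2_def reflection_line_def inner_vec_def sum_2 algebra_simps)
  ultimately show ?thesis by simp
qed

lemma strictly_decreasing_index_map:
  fixes \<sigma> :: "nat \<Rightarrow> nat"
  assumes range: "\<And>i. 0 < i \<Longrightarrow> i < q \<Longrightarrow> 0 < \<sigma> i \<and> \<sigma> i < q"
    and decreasing: "\<And>i i'. 0 < i \<Longrightarrow> i < i' \<Longrightarrow> i' < q \<Longrightarrow> \<sigma> i' < \<sigma> i"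
    and i: "0 < i" "i < q"
  shows "\<sigma> i = q - i"
proof -
  \<comment> \<open>\<open>\<sigma>\<close> maps the \<open>q - 1 - i\<close> indices after \<open>i\<close> below \<open>\<sigma> i\<close>
    and the \<open>i - 1\<close> indices before \<open>i\<close> above it.\<close>
  have inj: "inj_on \<sigma> A" if "A \<subseteq> {0<..<q}" for A
  proof (rule linorder_inj_onI')
    fix x y assume "x \<in> A" "y \<in> A" "x < y"
    then show "\<sigma> x \<noteq> \<sigma> y" using that decreasing[of x y] by force
  qed
  have "\<sigma> ` {i<..<q} \<subseteq> {0<..<\<sigma> i}"
  proof
    fix y assume "y \<in> \<sigma> ` {i<..<q}"
    then obtain i' where "i < i'" "i' < q" "y = \<sigma> i'" by auto
    then show "y \<in> {0<..<\<sigma> i}" using decreasing[of i i'] range[of i'] i by simp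
  qed
  then have "card (\<sigma> ` {i<..<q}) \<le> card {0<..<\<sigma> i}" by (rule card_mono[rotated]) simp
  moreover have "card (\<sigma> ` {i<..<q}) = q - 1 - i"
    using i by (subst card_image) (auto intro: inj)
  ultimately have upper: "q - 1 - i \<le> \<sigma> i - 1" by simp
  have "\<sigma> ` {0<..<i} \<subseteq> {\<sigma> i<..<q}"
  proof
    fix y assume "y \<in> \<sigma> ` {0<..<i}"
    then obtain i' where "0 < i'" "i' < i" "y = \<sigma> i'" by auto
    then show "y \<in> {\<sigma> i<..<q}" using decreasing[of i' i] range[of i'] i by simp
  qed
  then have "card (\<sigma> ` {0<..<i}) \<le> card {\<sigma> i<..<q}" by (rule card_mono[rotated]) simp
  moreover have "card (\<sigma> ` {0<..<i}) = i - 1"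
    using i by (subst card_image) (auto intro: inj)
  ultimately have lower: "i - 1 \<le> q - 1 - \<sigma> i" by simp
  show ?thesis using upper lower range[OF i] i by linarith
qed

lemma orientation_reversing_symmetry_index:
  fixes p :: "nat \<Rightarrow> real^2" and f :: "real^2 \<Rightarrow> real^2"
  assumes inj: "inj_on p {..<q}" and "inj f"
    and pos: "\<forall>i j k. i < j \<and> j < k \<and> k < q \<longrightarrow> det2 (p j - p i) (p k - p i) > 0"
    and image: "f ` p ` {..<q} = p ` {..<q}" and fixed: "f (p 0) = p 0"
    and reverses: "\<And>x y z. det2 (f y - f x) (f z - f x) = - det2 (y - x) (z - x)"
    and i: "i < q"
  shows "f (p i) = p ((q - i) mod q)"
proof -
  define \<sigma> where "\<sigma> i = (SOME i'. i' < q \<and> p i' = f (p i))" for i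
  have \<sigma>: "\<sigma> i < q \<and> p (\<sigma> i) = f (p i)" if "i < q" for i
  proof -
    have "f (p i) \<in> p ` {..<q}" using image that by blast
    then have "\<exists>i'. i' < q \<and> p i' = f (p i)" by auto
    then show ?thesis unfolding \<sigma>_def by (rule someI_ex)
  qed
  have \<sigma>_pos: "0 < \<sigma> i" if "0 < i" "i < q" for i
  proof (rule ccontr)
    assume "\<not> 0 < \<sigma> i"
    then have "f (p i) = f (p 0)" using \<sigma>[OF \<open>i < q\<close>] fixed by simp
    then have "p i = p 0" using \<open>inj f\<close> by (simp add: inj_eq)
    then show False using inj that by (auto dest: inj_onD)
  qed
  have decreasing: "\<sigma> i' < \<sigma> i" if "0 < i" "i < i'" "i' < q" for i i'
  proof (rule ccontr)
    assume "\<not> \<sigma> i' < \<sigma> i"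
    then consider "\<sigma> i = \<sigma> i'" | "\<sigma> i < \<sigma> i'" by linarith
    then have "det2 (p (\<sigma> i) - p 0) (p (\<sigma> i') - p 0) \<ge> 0"
    proof cases
      case 1 then show ?thesis by (simp add: det2_def)
    next
      case 2
      have "0 < \<sigma> i" "\<sigma> i' < q" using \<sigma>_pos[of i] \<sigma>[of i'] that by auto
      then show ?thesis using pos[rule_format, of 0 "\<sigma> i" "\<sigma> i'"] 2 by simp
    qed
    moreover have "det2 (p (\<sigma> i) - p 0) (p (\<sigma> i') - p 0) = - det2 (p i - p 0) (p i' - p 0)"
      using reverses[where x = "p 0" and y = "p i" and z = "p i'"] \<sigma>[of i] \<sigma>[of i'] that fixed by simp
    moreover have "det2 (p i - p 0) (p i' - p 0) > 0" using pos that by blast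
    ultimately show False by simp
  qed
  show ?thesis
  proof (cases "i = 0")
    case True
    then show ?thesis using fixed by simp
  next
    case False
    then have "\<sigma> i = q - i"
      using strictly_decreasing_index_map[of q \<sigma> i] \<sigma> \<sigma>_pos decreasing i by auto
    then show ?thesis using \<sigma>[OF i] False by simp
  qed
qed

lemma reflection_line_frontier:
  assumes "open \<Omega>" and "axially_symmetric \<Omega> a u" and x: "x \<in> frontier \<Omega>"
  shows "reflection_line a u x \<in> frontier \<Omega>"
proof -
  let ?R = "reflection_line a u"
  have n: "norm u = 1" and image: "?R ` \<Omega> = \<Omega>"
    using assms(2) by (auto simp: axially_symmetric_def)
  have frontier: "frontier \<Omega> = closure \<Omega> - \<Omega>"
    using assms(1) by (simp add: frontier_def interior_open)
  have "continuous_on (closure \<Omega>) ?R"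
    unfolding reflection_line_def by (intro continuous_intros)
  then have "?R ` closure \<Omega> \<subseteq> closure \<Omega>"
    by (rule image_closure_subset) (use image closure_subset in auto)
  moreover have "?R x \<notin> \<Omega>"
  proof
    assume "?R x \<in> \<Omega>"
    then have "?R (?R x) \<in> \<Omega>" using image by blast
    then show False using x frontier reflection_line_involutive[OF n] by simp
  qed
  ultimately show ?thesis using x frontier by auto
qed

lemma periodic_add_of_int:
  assumes periodic: "\<And>t. f (t + 1) = f t"
  shows "f (t + of_int n) = (f t :: 'a)"
proof (induction n rule: int_induct[where k = 0])
  case (step1 i)
  have "t + of_int (i + 1) = (t + of_int i) + 1" by simp
  then show ?case using periodic step1.IH by (simp only:)
next
  case (step2 i)
  have "t + of_int i = (t + of_int (i - 1)) + 1" by simp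
  then show ?case using periodic step2.IH by (simp only:)
qed simp

lemma C1_boundary_param_frontier:
  assumes "C1_boundary_param \<Omega> \<gamma> \<gamma>'"
  shows "\<gamma> r \<in> frontier \<Omega>"
proof -
  have periodic: "\<And>t. \<gamma> (t + 1) = \<gamma> t" and image: "\<gamma> ` {0..<1} = frontier \<Omega>"
    using assms by (simp_all add: C1_boundary_param_def)
  have "\<gamma> r = \<gamma> (frac r)"
    using periodic_add_of_int[of \<gamma> "frac r" "\<lfloor>r\<rfloor>", OF periodic] by (simp add: frac_def)
  moreover have "frac r \<in> {0..<1}" by (simp add: frac_lt_1)
  ultimately show ?thesis using image by blast
qed

lemma C1_boundary_param_obtain:
  assumes "C1_boundary_param \<Omega> \<gamma> \<gamma>'" and "x \<in> frontier \<Omega>"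
  obtains t where "\<gamma> t = x"
proof -
  have "x \<in> \<gamma> ` {0..<1}" using assms by (simp add: C1_boundary_param_def)
  then show ?thesis using that by blast
qed

lemma midpoint_reflection_line:
  "midpoint x (reflection_line a u x) = a + ((x - a) \<bullet> u) *\<^sub>R u"
  by (simp add: midpoint_def reflection_line_def vec_eq_iff field_simps)

lemma line_point_in_open_segment:
  fixes a u :: "'a::real_vector"
  assumes "s < t" "t < t'" "u \<noteq> 0"
  shows "a + t *\<^sub>R u \<in> open_segment (a + t' *\<^sub>R u) (a + s *\<^sub>R u)"
proof -
  define \<theta> where "\<theta> = (t' - t) / (t' - s)"
  have \<theta>: "0 < \<theta>" "\<theta> < 1" using assms by (auto simp: \<theta>_def field_simps)
  have "\<theta> * (t' - s) = t' - t" using assms by (simp add: \<theta>_def)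
  then have "t = (1 - \<theta>) * t' + \<theta> * s" by (simp add: algebra_simps)
  moreover have "(1 - \<theta>) *\<^sub>R (a + t' *\<^sub>R u) + \<theta> *\<^sub>R (a + s *\<^sub>R u)
      = a + ((1 - \<theta>) * t' + \<theta> * s) *\<^sub>R u"
    by (simp add: algebra_simps)
  ultimately have "a + t *\<^sub>R u = (1 - \<theta>) *\<^sub>R (a + t' *\<^sub>R u) + \<theta> *\<^sub>R (a + s *\<^sub>R u)"
    by simp
  moreover have "a + t' *\<^sub>R u \<noteq> a + s *\<^sub>R u" using assms by simp
  ultimately show ?thesis using \<theta> by (auto simp: in_segment)
qed

lemma axis_frontier_point_supports:
  assumes sc: "strictly_convex_domain \<Omega>" and sym: "axially_symmetric \<Omega> a u"
    and x0: "x0 \<in> frontier \<Omega>" "reflection_line a u x0 = x0"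
    and y: "y \<in> frontier \<Omega>" "y' \<in> frontier \<Omega>"
  shows "(y - x0) \<bullet> u \<le> 0 \<or> (y' - x0) \<bullet> u \<ge> 0"
proof (rule ccontr)
  assume "\<not> ?thesis"
  then have sides: "(y' - a) \<bullet> u < (x0 - a) \<bullet> u" "(x0 - a) \<bullet> u < (y - a) \<bullet> u"
    by (auto simp: inner_diff_left)
  have op: "open \<Omega>" and cv: "convex \<Omega>"
    and strict: "\<forall>x\<in>closure \<Omega>. \<forall>y\<in>closure \<Omega>. x \<noteq> y \<longrightarrow> open_segment x y \<subseteq> \<Omega>"
    using sc by (auto simp: strictly_convex_domain_def)
  have u: "u \<noteq> 0" using sym by (auto simp: axially_symmetric_def)
  define m where "m z = a + ((z - a) \<bullet> u) *\<^sub>R u" for z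
  have m_closure: "m z \<in> closure \<Omega>" if "z \<in> frontier \<Omega>" for z
  proof -
    have "z \<in> closure \<Omega>" "reflection_line a u z \<in> closure \<Omega>"
      using that reflection_line_frontier[OF op sym that] by (auto simp: frontier_def)
    then show ?thesis
      unfolding m_def midpoint_reflection_line[symmetric] midpoint_def scaleR_right_distrib
      by (rule convexD[OF convex_closure[OF cv]]) simp_all
  qed
  \<comment> \<open>The projections of boundary points to the axis are midpoints of mirror pairs, hence lie in
    the closure; \<open>x0\<close> would lie strictly between two of them.\<close>
  have "x0 = m x0" using x0(2) midpoint_reflection_line[of x0 a u] by (simp add: m_def)
  also have "\<dots> \<in> open_segment (m y) (m y')"
    unfolding m_def by (rule line_point_in_open_segment[OF sides u])
  also have "\<dots> \<subseteq> \<Omega>"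
  proof -
    have "m y \<noteq> m y'" using sides u by (simp add: m_def)
    then show ?thesis using strict m_closure[OF y(1)] m_closure[OF y(2)] by blast
  qed
  finally show False using x0(1) op by (simp add: frontier_def interior_open)
qed

lemma axis_tangent_orthogonal:
  assumes sc: "strictly_convex_domain \<Omega>" and sym: "axially_symmetric \<Omega> a u"
    and par: "C1_boundary_param \<Omega> \<gamma> \<gamma>'" and fixed: "reflection_line a u (\<gamma> s) = \<gamma> s"
  shows "\<gamma>' s \<bullet> u = 0"
proof -
  define g where "g r = (\<gamma> r - \<gamma> s) \<bullet> u" for r
  have "(\<gamma> has_vector_derivative \<gamma>' s) (at s)" using par by (simp add: C1_boundary_param_def)
  then have "((\<lambda>r. \<gamma> r \<bullet> u) has_vector_derivative \<gamma>' s \<bullet> u) (at s)"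
    by (rule bounded_linear.has_vector_derivative[OF bounded_linear_inner_left])
  then have "((\<lambda>r. \<gamma> r \<bullet> u - \<gamma> s \<bullet> u) has_real_derivative \<gamma>' s \<bullet> u) (at s)"
    by (simp add: has_real_derivative_iff_has_vector_derivative has_vector_derivative_diff_const)
  then have deriv: "(g has_real_derivative \<gamma>' s \<bullet> u) (at s)"
    unfolding g_def by (simp add: inner_diff_left)
  have "(\<forall>r. g r \<le> g s) \<or> (\<forall>r. g s \<le> g r)"
    using axis_frontier_point_supports[OF sc sym C1_boundary_param_frontier[OF par] fixed
        C1_boundary_param_frontier[OF par] C1_boundary_param_frontier[OF par]]
    unfolding g_def by fastforce
  then show ?thesis
    using DERIV_local_max[OF deriv zero_less_one] DERIV_local_min[OF deriv zero_less_one] by blast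
qed

lemma has_real_derivative_local_max_eq_0:
  assumes "(f has_real_derivative l) (at x)" and "eventually (\<lambda>y. f y \<le> f x) (at x)"
  shows "l = 0"
proof -
  have "(\<lambda>h. l * h) = (\<lambda>h. 0)"
    using has_derivative_local_max assms unfolding has_field_derivative_def by blast
  then show ?thesis by (metis mult.right_neutral)
qed

lemma vec_nth_has_real_derivative:
  assumes "(f has_vector_derivative f') (at x)"
  shows "((\<lambda>s. f s $ i) has_real_derivative f' $ i) (at x)"
  unfolding has_real_derivative_iff_has_vector_derivative
  by (rule bounded_linear.has_vector_derivative[OF bounded_linear_vec_nth assms])

lemma det2_has_real_derivative:
  assumes "(f has_vector_derivative f') (at x)" and "(g has_vector_derivative g') (at x)"
  shows "((\<lambda>s. det2 (f s) (g s)) has_real_derivative det2 f' (g x) + det2 (f x) g') (at x)"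
  unfolding det2_def
  by (auto intro!: derivative_eq_intros vec_nth_has_real_derivative assms simp: algebra_simps)

lemma tendsto_det2:
  assumes "(f \<longlongrightarrow> v) F" and "(g \<longlongrightarrow> w) F"
  shows "((\<lambda>s. det2 (f s) (g s)) \<longlongrightarrow> det2 v w) F"
  unfolding det2_def by (intro tendsto_intros assms)

lemma polygon_area_has_real_derivative:
  fixes P :: "real \<Rightarrow> nat \<Rightarrow> real^2"
  assumes q: "0 < q" and deriv: "\<And>i. i < q \<Longrightarrow> ((\<lambda>s. P s i) has_vector_derivative D i) (at x)"
  shows "((\<lambda>s. polygon_area q (P s)) has_real_derivative
    (1/2) * (\<Sum>i<q. det2 (D i) (P x ((i + 1) mod q) - P x ((i + q - 1) mod q)))) (at x)"
proof -
  let ?next = "\<lambda>i. (i + 1) mod q" and ?prev = "\<lambda>i. (i + q - 1) mod q"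
  have "((\<lambda>s. polygon_area q (P s)) has_real_derivative
      (1/2) * (\<Sum>i<q. det2 (D i) (P x (?next i)) + det2 (P x i) (D (?next i)))) (at x)"
    unfolding polygon_area_def
    by (intro DERIV_cmult DERIV_sum det2_has_real_derivative deriv) (simp_all add: q)
  moreover have "(\<Sum>i<q. det2 (D i) (P x (?next i)) + det2 (P x i) (D (?next i)))
      = (\<Sum>i<q. det2 (D i) (P x (?next i) - P x (?prev i)))"
  proof -
    have "(\<Sum>i<q. det2 (P x i) (D (?next i))) = (\<Sum>i<q. det2 (P x (?prev i)) (D i))"
      by (rule sum.reindex_bij_witness[where i = ?prev and j = ?next])
        (use prev_next_index next_prev_index q in auto)
    also have "\<dots> = (\<Sum>i<q. - det2 (D i) (P x (?prev i)))"
      by (intro sum.cong refl) (rule det2_swap)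
    finally show ?thesis
      by (simp add: sum.distrib sum_negf det2_diff_right sum_subtractf)
  qed
  ultimately show ?thesis by simp
qed

lemma symmetric_variation_area_derivative:
  fixes p :: "nat \<Rightarrow> real^2" and c :: "real \<Rightarrow> real^2"
  assumes n: "norm u = 1" and j: "j < q" and k: "k = (q - j) mod q" "k \<noteq> j"
    and symmetric: "\<And>i. i < q \<Longrightarrow> reflection_line a u (p i) = p ((q - i) mod q)"
    and c: "c 0 = p j" "(c has_vector_derivative w) (at 0)"
  shows "((\<lambda>s. polygon_area q (p(j := c s, k := reflection_line a u (c s)))) has_real_derivative
    det2 w (p ((j + 1) mod q) - p ((j + q - 1) mod q))) (at 0)"
proof -
  let ?R = "reflection_line a u" and ?L = "reflection_line 0 u"
  let ?next = "\<lambda>i. (i + 1) mod q" and ?prev = "\<lambda>i. (i + q - 1) mod q"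
  define D where "D = (\<lambda>i. 0)(j := w, k := ?L w)"
  have q: "0 < q" and kq: "k < q" using j k by auto
  have P0: "p(j := c 0, k := ?R (c 0)) = p"
    using symmetric[OF j] c(1) k by (auto simp: fun_eq_iff)
  have "((\<lambda>s. ?R (c s)) has_vector_derivative ?L w) (at 0)"
    unfolding reflection_line_eq[of a u]
    by (rule has_vector_derivative_eq_rhs[OF has_vector_derivative_add[OF has_vector_derivative_const
          bounded_linear.has_vector_derivative[OF bounded_linear_reflection_line_0
            has_vector_derivative_diff[OF c(2) has_vector_derivative_const]]]]) simp
  with c(2) have "((\<lambda>s. (p(j := c s, k := ?R (c s))) i) has_vector_derivative D i) (at 0)" for i
    by (simp add: D_def)
  from polygon_area_has_real_derivative[of q "\<lambda>s. p(j := c s, k := ?R (c s))", OF q this]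
  have "((\<lambda>s. polygon_area q (p(j := c s, k := ?R (c s)))) has_real_derivative
      (1/2) * (\<Sum>i<q. det2 (D i) (p (?next i) - p (?prev i)))) (at 0)"
    unfolding P0 .
  moreover have "(\<Sum>i<q. det2 (D i) (p (?next i) - p (?prev i)))
      = (\<Sum>i\<in>{j, k}. det2 (D i) (p (?next i) - p (?prev i)))"
    by (rule sum.mono_neutral_right) (use j kq in \<open>auto simp: D_def det2_def\<close>)
  moreover have "\<dots> = det2 w (p (?next j) - p (?prev j)) + det2 (?L w) (p (?next k) - p (?prev k))"
    using k(2) by (simp add: D_def)
  moreover have "det2 (?L w) (p (?next k) - p (?prev k)) = det2 w (p (?next j) - p (?prev j))"
  proof -
    have "p (?next k) = ?R (p (?prev j))" "p (?prev k) = ?R (p (?next j))"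
      using symmetric j q k(1) mirror_prev_index[OF j] mirror_next_index[OF j] by auto
    then have eq: "p (?next k) - p (?prev k) = ?L (p (?prev j) - p (?next j))"
      by (simp add: reflection_line_diff)
    show ?thesis unfolding eq det2_reflection_line_0[OF n] by (simp add: det2_def algebra_simps)
  qed
  ultimately show ?thesis by simp
qed

lemma eventually_convex_position:
  fixes P :: "'b \<Rightarrow> nat \<Rightarrow> real^2"
  assumes lim: "\<And>i. i < q \<Longrightarrow> ((\<lambda>s. P s i) \<longlongrightarrow> p i) F"
    and inj: "inj_on p {..<q}"
    and pos: "\<forall>i j k. i < j \<and> j < k \<and> k < q \<longrightarrow> det2 (p j - p i) (p k - p i) > 0"
  shows "eventually (\<lambda>s. inj_on (P s) {..<q} \<and>
    (\<forall>i j k. i < j \<and> j < k \<and> k < q \<longrightarrow> det2 (P s j - P s i) (P s k - P s i) > 0)) F"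
proof -
  let ?pairs = "{(i, j). i < q \<and> j < q \<and> i \<noteq> j}"
  let ?triples = "{(i, j, k). i < j \<and> j < k \<and> k < q}"
  have "finite ?pairs" by (rule finite_subset[of _ "{..<q} \<times> {..<q}"]) auto
  then have "eventually (\<lambda>s. \<forall>(i, j) \<in> ?pairs. P s i \<noteq> P s j) F"
  proof (rule eventually_ball_finite, safe)
    fix i j assume "i < q" "j < q" "i \<noteq> j"
    then have "p i - p j \<noteq> 0" using inj by (auto dest: inj_onD)
    with tendsto_diff[OF lim[OF \<open>i < q\<close>] lim[OF \<open>j < q\<close>]]
    have "eventually (\<lambda>s. P s i - P s j \<noteq> 0) F" by (rule tendsto_imp_eventually_ne)
    then show "eventually (\<lambda>s. P s i \<noteq> P s j) F" by (rule eventually_mono) simp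
  qed
  moreover have "finite ?triples" by (rule finite_subset[of _ "{..<q} \<times> {..<q} \<times> {..<q}"]) auto
  then have "eventually (\<lambda>s. \<forall>(i, j, k) \<in> ?triples. det2 (P s j - P s i) (P s k - P s i) > 0) F"
  proof (rule eventually_ball_finite, safe)
    fix i j k assume ijk: "i < j" "j < k" "k < q"
    then have "((\<lambda>s. det2 (P s j - P s i) (P s k - P s i)) \<longlongrightarrow> det2 (p j - p i) (p k - p i)) F"
      by (intro tendsto_det2 tendsto_diff lim) simp_all
    moreover have "det2 (p j - p i) (p k - p i) > 0" using pos ijk by blast
    ultimately show "eventually (\<lambda>s. det2 (P s j - P s i) (P s k - P s i) > 0) F"
      by (rule order_tendstoD(1))
  qed
  ultimately show ?thesis
    by eventually_elim (auto simp: inj_on_def)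
qed

lemma mirror_symmetric_image:
  fixes q :: nat
  assumes "\<And>i. i < q \<Longrightarrow> f (P i) = P ((q - i) mod q)"
  shows "f ` P ` {..<q} = P ` {..<q}"
proof
  show "f ` P ` {..<q} \<subseteq> P ` {..<q}"
  proof
    fix x assume "x \<in> f ` P ` {..<q}"
    then obtain i where i: "i < q" "x = f (P i)" by auto
    moreover have "(q - i) mod q < q" using i by simp
    ultimately show "x \<in> P ` {..<q}" using assms[of i] by auto
  qed
  show "P ` {..<q} \<subseteq> f ` P ` {..<q}"
  proof
    fix x assume "x \<in> P ` {..<q}"
    then obtain i where i: "i < q" "x = P i" by auto
    then have "x = f (P ((q - i) mod q))"
      using assms[of "(q - i) mod q"] mirror_mirror_index[OF i(1)] by simp
    moreover have "(q - i) mod q < q" using i by simp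
    ultimately show "x \<in> f ` P ` {..<q}" by blast
  qed
qed

lemma sym_polygons_reflection_index:
  assumes "p \<in> sym_polygons \<Omega> a u P0 q" and n: "norm u = 1"
    and "reflection_line a u P0 = P0" and "i < q"
  shows "reflection_line a u (p i) = p ((q - i) mod q)"
proof (rule orientation_reversing_symmetry_index)
  show "inj (reflection_line a u)"
  proof (rule injI)
    fix x y assume "reflection_line a u x = reflection_line a u y"
    then have "reflection_line a u (reflection_line a u x) = reflection_line a u (reflection_line a u y)"
      by simp
    then show "x = y" by (simp add: reflection_line_involutive[OF n])
  qed
  show "det2 (reflection_line a u y - reflection_line a u x) (reflection_line a u z - reflection_line a u x)
      = - det2 (y - x) (z - x)" for x y z
    by (simp add: reflection_line_diff det2_reflection_line_0[OF n])
qed (use assms in \<open>auto simp: sym_polygons_def\<close>)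

lemma sym_polygons_update_mirror_pair:
  fixes p :: "nat \<Rightarrow> real^2"
  assumes "open \<Omega>" and sym: "axially_symmetric \<Omega> a u"
    and pin: "p \<in> sym_polygons \<Omega> a u P0 q"
    and symmetric: "\<And>i. i < q \<Longrightarrow> reflection_line a u (p i) = p ((q - i) mod q)"
    and j: "j < q" "j \<noteq> 0" and k: "k = (q - j) mod q" "k \<noteq> j" "k \<noteq> 0"
    and x: "x \<in> frontier \<Omega>"
    and inj: "inj_on (p(j := x, k := reflection_line a u x)) {..<q}"
    and pos: "\<forall>i i' i''. i < i' \<and> i' < i'' \<and> i'' < q \<longrightarrow>
      det2 ((p(j := x, k := reflection_line a u x)) i' - (p(j := x, k := reflection_line a u x)) i)
           ((p(j := x, k := reflection_line a u x)) i'' - (p(j := x, k := reflection_line a u x)) i) > 0"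
  shows "p(j := x, k := reflection_line a u x) \<in> sym_polygons \<Omega> a u P0 q"
proof -
  let ?R = "reflection_line a u" and ?mirror = "\<lambda>i. (q - i) mod q"
  let ?P = "p(j := x, k := ?R x)"
  have n: "norm u = 1" using sym by (simp add: axially_symmetric_def)
  have "\<forall>i<q. p i \<in> frontier \<Omega>" and p0: "p 0 = P0" using pin by (auto simp: sym_polygons_def)
  then have "\<forall>i<q. ?P i \<in> frontier \<Omega>"
    using x reflection_line_frontier[OF assms(1) sym x] by auto
  moreover have "?R (?P i) = ?P (?mirror i)" if i: "i < q" for i
  proof -
    have mirror_k: "?mirror k = j" using k(1) mirror_mirror_index[OF j(1)] by simp
    moreover have "?mirror i \<noteq> j" "?mirror i \<noteq> k" if "i \<noteq> j" "i \<noteq> k"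
      using that k(1) mirror_k mirror_mirror_index[OF i] by metis+
    ultimately show ?thesis
      using symmetric[OF i] reflection_line_involutive[OF n, of a x] k by auto
  qed
  then have "?R ` ?P ` {..<q} = ?P ` {..<q}" by (rule mirror_symmetric_image)
  moreover have "?P 0 = P0" using j k p0 by simp
  ultimately show ?thesis using inj pos by (simp add: sym_polygons_def)
qed

lemma max_area_off_axis_vertex:
  fixes p :: "nat \<Rightarrow> real^2"
  assumes sc: "strictly_convex_domain \<Omega>" and par: "C1_boundary_param \<Omega> \<gamma> \<gamma>'"
    and sym: "axially_symmetric \<Omega> a u"
    and pin: "p \<in> sym_polygons \<Omega> a u P0 q"
    and max: "\<forall>p' \<in> sym_polygons \<Omega> a u P0 q. polygon_area q p' \<le> polygon_area q p"
    and symmetric: "\<And>i. i < q \<Longrightarrow> reflection_line a u (p i) = p ((q - i) mod q)"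
    and j: "j < q" and off_axis: "(q - j) mod q \<noteq> j" and t: "\<gamma> t = p j"
  shows "det2 (p ((j + 1) mod q) - p ((j + q - 1) mod q)) (\<gamma>' t) = 0"
proof -
  let ?R = "reflection_line a u"
  define k where "k = (q - j) mod q"
  \<comment> \<open>Moving \<open>p j\<close> alone would break the symmetry, so its mirror vertex moves along with it.\<close>
  define P where "P s = p(j := \<gamma> (t + s), k := ?R (\<gamma> (t + s)))" for s
  have n: "norm u = 1" using sym by (simp add: axially_symmetric_def)
  have op: "open \<Omega>" using sc by (simp add: strictly_convex_domain_def)
  have j0: "j \<noteq> 0" using off_axis by (cases "j = 0") auto
  have k0: "k \<noteq> 0"
  proof
    assume "k = 0"
    then have "j = q mod q" using mirror_mirror_index[OF j] by (simp add: k_def)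
    then show False using j0 by simp
  qed
  have k: "k < q" "k \<noteq> j" using j off_axis by (auto simp: k_def)
  have "((\<lambda>s. t + s) has_vector_derivative 1) (at 0)"
    by (rule has_vector_derivative_eq_rhs[OF has_vector_derivative_add[OF
          has_vector_derivative_const has_vector_derivative_id]]) simp
  then have c: "((\<lambda>s. \<gamma> (t + s)) has_vector_derivative \<gamma>' t) (at 0)"
    using vector_diff_chain_at[of "\<lambda>s. t + s" 1 0 \<gamma> "\<gamma>' t"] par
    by (simp add: C1_boundary_param_def o_def)
  have deriv: "((\<lambda>s. polygon_area q (P s)) has_real_derivative
      det2 (\<gamma>' t) (p ((j + 1) mod q) - p ((j + q - 1) mod q))) (at 0)"
    unfolding P_def
    by (rule symmetric_variation_area_derivative[where p = p, OF n j k_def k(2) symmetric])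
      (simp_all add: t c)
  have P0: "P 0 = p" using symmetric[OF j] t k by (auto simp: P_def k_def)
  have lim_j: "((\<lambda>s. \<gamma> (t + s)) \<longlongrightarrow> p j) (at 0)"
    using has_vector_derivative_continuous[OF c] t by (simp add: continuous_at)
  have "((\<lambda>s. ?R (\<gamma> (t + s))) \<longlongrightarrow> ?R (p j)) (at 0)"
    unfolding reflection_line_def by (intro tendsto_intros lim_j)
  then have lim_k: "((\<lambda>s. ?R (\<gamma> (t + s))) \<longlongrightarrow> p k) (at 0)"
    using symmetric[OF j] by (simp add: k_def)
  have "((\<lambda>s. P s i) \<longlongrightarrow> p i) (at 0)" for i
    using lim_j lim_k k(2) by (cases "i = k"; cases "i = j") (simp_all add: P_def)
  then have "eventually (\<lambda>s. inj_on (P s) {..<q} \<and> (\<forall>i i' i''. i < i' \<and> i' < i'' \<and> i'' < q \<longrightarrow>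
      det2 (P s i' - P s i) (P s i'' - P s i) > 0)) (at 0)"
    by (rule eventually_convex_position) (use pin in \<open>auto simp: sym_polygons_def\<close>)
  then have "eventually (\<lambda>s. P s \<in> sym_polygons \<Omega> a u P0 q) (at 0)"
    unfolding P_def
    by (rule eventually_mono) (elim conjE, rule sym_polygons_update_mirror_pair[OF op sym pin
          symmetric j j0 k_def k(2) k0 C1_boundary_param_frontier[OF par]], assumption+)
  then have "eventually (\<lambda>s. polygon_area q (P s) \<le> polygon_area q (P 0)) (at 0)"
    unfolding P0 by (rule eventually_mono) (use max in blast)
  then have "det2 (\<gamma>' t) (p ((j + 1) mod q) - p ((j + q - 1) mod q)) = 0"
    by (rule has_real_derivative_local_max_eq_0[OF deriv])
  then show ?thesis by (simp add: det2_swap[of _ "\<gamma>' t"])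
qed

lemma max_area_bounce_condition:
  fixes p :: "nat \<Rightarrow> real^2"
  assumes sc: "strictly_convex_domain \<Omega>" and par: "C1_boundary_param \<Omega> \<gamma> \<gamma>'"
    and sym: "axially_symmetric \<Omega> a u"
    and pin: "p \<in> sym_polygons \<Omega> a u P0 q"
    and max: "\<forall>p' \<in> sym_polygons \<Omega> a u P0 q. polygon_area q p' \<le> polygon_area q p"
    and symmetric: "\<And>i. i < q \<Longrightarrow> reflection_line a u (p i) = p ((q - i) mod q)"
    and j: "j < q" and t: "\<gamma> t = p j"
  shows "det2 (p ((j + 1) mod q) - p ((j + q - 1) mod q)) (\<gamma>' t) = 0 \<and>
    (p ((j + 1) mod q) = p ((j + q - 1) mod q) \<longrightarrow>
      (\<exists>s. \<gamma> s = p ((j + q - 1) mod q) \<and> det2 (\<gamma>' s) (\<gamma>' t) = 0))"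
proof (cases "(q - j) mod q = j")
  case on_axis: True
  let ?next = "(j + 1) mod q" and ?prev = "(j + q - 1) mod q"
  have u: "u \<noteq> 0" using sym by (auto simp: axially_symmetric_def)
  have tangent: "\<gamma>' t \<bullet> u = 0"
    using axis_tangent_orthogonal[OF sc sym par] symmetric[OF j] on_axis t by simp
  have prev: "?prev < q" using j by simp
  have next_eq: "p ?next = reflection_line a u (p ?prev)"
    using symmetric[OF prev] mirror_prev_index[OF j] on_axis by simp
  have "p ?next = p ?prev \<longrightarrow> (\<exists>s. \<gamma> s = p ?prev \<and> det2 (\<gamma>' s) (\<gamma>' t) = 0)"
  proof
    assume "p ?next = p ?prev"
    moreover obtain s where s: "\<gamma> s = p ?prev"
      using C1_boundary_param_obtain[OF par] pin prev by (auto simp: sym_polygons_def)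
    ultimately have "\<gamma>' s \<bullet> u = 0"
      using axis_tangent_orthogonal[OF sc sym par] next_eq by simp
    then show "\<exists>s. \<gamma> s = p ?prev \<and> det2 (\<gamma>' s) (\<gamma>' t) = 0"
      using s det2_eq_0_if_orthogonal[OF _ tangent u] by blast
  qed
  moreover have "det2 (p ?next - p ?prev) (\<gamma>' t) = 0"
    unfolding next_eq
    by (rule det2_eq_0_if_orthogonal[OF reflection_line_sub_orthogonal tangent u])
      (use sym in \<open>simp add: axially_symmetric_def\<close>)
  ultimately show ?thesis by blast
next
  case off_axis: False
  have "p ((j + 1) mod q) \<noteq> p ((j + q - 1) mod q)"
    using pin off_axis mirror_index_eq_if_next_eq_prev[OF j] j
    by (auto simp: sym_polygons_def dest: inj_onD)
  then show ?thesis using max_area_off_axis_vertex[OF sc par sym pin max symmetric j off_axis t] by blast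
qed

theorem proposition3p3:
  fixes \<Omega> :: "(real^2) set" and \<gamma> \<gamma>' :: "real \<Rightarrow> real^2"
    and a u P0 :: "real^2" and q :: nat and p :: "nat \<Rightarrow> real^2"
  assumes "strictly_convex_domain \<Omega>"
    and "C1_boundary_param \<Omega> \<gamma> \<gamma>'"
    and "axially_symmetric \<Omega> a u"
    and "P0 \<in> frontier \<Omega>" and "reflection_line a u P0 = P0"
    and "q \<ge> 2"
    and "p \<in> sym_polygons \<Omega> a u P0 q"
    and "\<forall>p' \<in> sym_polygons \<Omega> a u P0 q. polygon_area q p' \<le> polygon_area q p"
  shows "symplectic_periodic_orbit \<Omega> \<gamma> \<gamma>' q p"
  unfolding symplectic_periodic_orbit_def consecutive_bounces_def
proof (intro allI impI conjI)
  fix j assume j: "j < q"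
  let ?next = "(j + 1) mod q" and ?prev = "(j + q - 1) mod q"
  have symmetric: "\<And>i. i < q \<Longrightarrow> reflection_line a u (p i) = p ((q - i) mod q)"
    using sym_polygons_reflection_index[OF assms(7) _ assms(5)] assms(3)
    by (simp add: axially_symmetric_def)
  have frontier: "\<forall>i<q. p i \<in> frontier \<Omega>" and inj: "inj_on p {..<q}"
    using assms(7) by (auto simp: sym_polygons_def)
  have "?prev < q" "?next < q" "?next \<noteq> j" "?prev \<noteq> j"
    using j next_index_neq[OF assms(6), of j] next_prev_index[OF j] by auto
  then show "p ?prev \<in> frontier \<Omega>" "p j \<in> frontier \<Omega>" "p ?next \<in> frontier \<Omega>"
    and "p ?prev \<noteq> p j" "p j \<noteq> p ?next"
    using frontier inj j by (auto dest: inj_onD)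
  obtain t where "\<gamma> t = p j"
    using C1_boundary_param_obtain[OF assms(2)] frontier j by blast
  then show "\<exists>t. \<gamma> t = p j \<and> det2 (p ?next - p ?prev) (\<gamma>' t) = 0 \<and>
      (p ?next = p ?prev \<longrightarrow> (\<exists>s. \<gamma> s = p ?prev \<and> det2 (\<gamma>' s) (\<gamma>' t) = 0))"
    using max_area_bounce_condition[OF assms(1-3,7-8) symmetric j] by blast
qed

end
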